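(* Let $n\ge2$, $0\le m\le n(n-1)$ and $\kappa=\lfloor \frac{m}{n-1}\rfloor$. Then $\mathbb G(n,m)$ is the union of $\kappa$ simple $n$-vertex directed stars rooted at vertices $1,\dots,\kappa$ respectively, and the $n$-vertex simple directed forest consisting of an $(m-\kappa(n-1)+1)$-vertex directed star rooted at vertex $\kappa+1$ together with $n-(m-\kappa(n-1)+1)$ isolated vertices (when $m=\kappa(n-1)$ this forest has no arcs).
   Context: For integers $n\ge2$ and $0\le m\le n(n-1)$, $\mathbb G(n,m)$ is the simple directed graph on vertex set $\{1,\dots,n\}$ whose arc set is $\{(\lceil \frac{i}{n-1}\rceil,\ n-((i-1)\bmod n)) : i=1,\dots,m\}$, where an arc $(j,k)$ goes from $j$ to $k$ and $a\bmod b\in\{0,\dots,b-1\}$; these $m$ pairs are pairwise distinct pairs of distinct vertices. The $n$-vertex directed star rooted at $r$ has arcs $(r,j)$ for all $j\ne r$; a $k$-vertex directed star rooted at $r$ consists of $r$ and $k-1$ other vertices with arcs from $r$ to each of them. A union of graphs on the same vertex set has as arc set the union of their arc sets. *)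

theory Defs
  imports Complex_Main
begin

text \<open>Arc set of the digraph G(n,m) on vertex set {1..n}; an arc (j,k) goes from j to k.\<close>
definition Gnm_arcs :: "nat \<Rightarrow> nat \<Rightarrow> (nat \<times> nat) set" where
  "Gnm_arcs n m =
     {(nat \<lceil>real i / real (n - 1)\<rceil>, n - ((i - 1) mod n)) | i. 1 \<le> i \<and> i \<le> m}"

definition is_dir_star :: "nat \<Rightarrow> nat \<Rightarrow> nat \<Rightarrow> (nat \<times> nat) set \<Rightarrow> bool" where
  "is_dir_star n k r A \<longleftrightarrow>
     (\<exists>L. L \<subseteq> {1..n} - {r} \<and> card L = k - 1 \<and> A = {(r, j) | j. j \<in> L})"

end

theory Submission
  imports Defs
begin

text \<open>Number the arcs from 0. Arc \<open>k\<close> leaves \<open>k div (n-1) + 1\<close> and enters \<open>n - k mod n\<close>, so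
  the arcs come in consecutive blocks of \<open>n - 1\<close> sharing a tail. In the block of tail \<open>j\<close> the
  indices \<open>(j-1)(n-1) + s\<close>, \<open>s < n - 1\<close>, are fewer than \<open>n\<close> consecutive integers, so the heads
  are distinct, and no head is \<open>j\<close> because \<open>(j-1)(n-1) + s + j = (j-1)n + s + 1\<close> with
  \<open>0 < s + 1 < n\<close>. Hence the first \<open>m div (n-1)\<close> blocks are full out-stars and the remaining
  \<open>m mod (n-1)\<close> arcs form a partial out-star.\<close>

lemma ceiling_of_nat_divide:
  assumes "d > 0"
  shows "\<lceil>real (Suc k) / real d\<rceil> = int (k div d) + 1"
proof (rule ceiling_unique)
  have "k div d * d \<le> k" and "Suc k \<le> d + k div d * d"
    using dividend_less_div_times[OF assms, of k] by simp_all
  then have "real (k div d * d) \<le> real k" and "real (Suc k) \<le> real (d + k div d * d)"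
    by (simp_all only: of_nat_le_iff)
  then have "real (k div d) * real d < real (Suc k)"
    and "real (Suc k) \<le> (real (k div d) + 1) * real d"
    by (simp_all add: algebra_simps)
  with assms show "real_of_int (int (k div d) + 1) - 1 < real (Suc k) / real d"
    and "real (Suc k) / real d \<le> real_of_int (int (k div d) + 1)"
    by (simp_all add: field_simps)
qed

lemma inj_on_mod_atLeastLessThan: "inj_on (\<lambda>k::nat. k mod n) {a..<a + n}"
proof (rule linorder_inj_onI)
  fix k k' assume "k < k'" and "k \<in> {a..<a + n}" and "k' \<in> {a..<a + n}"
  then have "0 < k' - k" "k' - k < n" by auto
  then show "k mod n \<noteq> k' mod n"
    using mod_eq_dvd_iff_nat[of k k' n] \<open>k < k'\<close> by (auto dest: dvd_imp_le)
qed auto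

lemma Gnm_arcs_eq:
  assumes "n \<ge> 2"
  shows "Gnm_arcs n m = {(k div (n - 1) + 1, n - k mod n) | k. k < m}"
proof -
  have tail: "nat \<lceil>real (Suc k) / real (n - 1)\<rceil> = k div (n - 1) + 1" for k
    using ceiling_of_nat_divide[of "n - 1" k] assms by simp
  have reindex: "{f i | i. 1 \<le> i \<and> i \<le> m} = {f (Suc k) | k. k < m}" for f :: "nat \<Rightarrow> nat \<times> nat"
  proof -
    have "{f i | i. 1 \<le> i \<and> i \<le> m} = f ` {1..m}" by auto
    also have "\<dots> = f ` Suc ` {..<m}" by (simp add: image_Suc_lessThan)
    finally show ?thesis by auto
  qed
  show ?thesis
    unfolding Gnm_arcs_def reindex[of "\<lambda>i. (nat \<lceil>real i / real (n - 1)\<rceil>, n - (i - 1) mod n)"]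
    by (simp only: tail diff_Suc_1)
qed

lemma Gnm_head_neq_tail:
  fixes n j s :: nat
  assumes "s < n - 1"
  shows "n - ((j - 1) * (n - 1) + s) mod n \<noteq> j"
proof
  define k where "k = (j - 1) * (n - 1) + s"
  assume "n - k mod n = j"
  moreover have "k mod n < n" using assms by simp
  moreover note div_mult_mod_eq[of k n]
  ultimately have "k + j = n + k div n * n" and "0 < j" by linarith+
  then have "n dvd k + j" by simp
  moreover have "k + j = (j - 1) * n + Suc s"
    using \<open>0 < j\<close> assms unfolding k_def by (cases j; cases n) (auto simp: algebra_simps)
  ultimately have "n dvd Suc s" by (metis dvd_add_right_iff dvd_triv_right)
  then show False using assms by (auto dest: dvd_imp_le)
qed

text \<open>Arcs number \<open>(j-1)(n-1)+1, \<dots>, (j-1)(n-1)+l\<close> of the enumeration defining \<open>G(n,m)\<close>,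
  indexed from 0 here; they all leave \<open>j\<close>.\<close>

definition out_block :: "nat \<Rightarrow> nat \<Rightarrow> nat \<Rightarrow> (nat \<times> nat) set" where
  "out_block n j l = (\<lambda>k. (j, n - k mod n)) ` {(j - 1) * (n - 1)..<(j - 1) * (n - 1) + l}"

lemma is_dir_star_out_block:
  assumes "l < n"
  shows "is_dir_star n (l + 1) j (out_block n j l)"
proof -
  define a where "a = (j - 1) * (n - 1)"
  define L where "L = (\<lambda>k. n - k mod n) ` {a..<a + l}"
  have "inj_on (\<lambda>k. n - k mod n) {a..<a + l}"
  proof (rule inj_onI)
    fix k k' assume "k \<in> {a..<a + l}" "k' \<in> {a..<a + l}" and "n - k mod n = n - k' mod n"
    moreover have "k mod n < n" "k' mod n < n" using assms by simp_all
    ultimately have "k mod n = k' mod n" by linarith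
    moreover have "k \<in> {a..<a + n}" "k' \<in> {a..<a + n}"
      using assms \<open>k \<in> {a..<a + l}\<close> \<open>k' \<in> {a..<a + l}\<close> by auto
    ultimately show "k = k'" by (rule inj_onD[OF inj_on_mod_atLeastLessThan])
  qed
  then have card: "card L = l" unfolding L_def by (simp add: card_image)
  have sub: "L \<subseteq> {1..n} - {j}"
  proof
    fix x assume "x \<in> L"
    then obtain k where "x = n - k mod n" "a \<le> k" "k < a + l" unfolding L_def by auto
    then have x: "x = n - (a + (k - a)) mod n" and "k - a < l" by simp_all
    then have "k - a < n - 1" using assms by linarith
    then have "x \<noteq> j" unfolding x a_def by (rule Gnm_head_neq_tail)
    moreover have "(a + (k - a)) mod n < n" using assms by simp
    ultimately show "x \<in> {1..n} - {j}" using x by auto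
  qed
  have "out_block n j l = Pair j ` L"
    unfolding out_block_def L_def a_def by (simp add: image_image)
  also have "\<dots> = {(j, x) | x. x \<in> L}"
    by blast
  finally have "out_block n j l = {(j, x) | x. x \<in> L}" .
  with sub card show ?thesis
    unfolding is_dir_star_def by (intro exI[of _ L]) simp
qed

lemma Gnm_arcs_subset_out_blocks:
  assumes "n \<ge> 2"
  shows "Gnm_arcs n m \<subseteq> (\<Union>j\<in>{1..m div (n - 1)}. out_block n j (n - 1))
                          \<union> out_block n (m div (n - 1) + 1) (m mod (n - 1))"
proof
  define d where "d = n - 1"
  define \<kappa> where "\<kappa> = m div d"
  have "d > 0" using assms unfolding d_def by simp
  have m: "m = \<kappa> * d + m mod d" unfolding \<kappa>_def by simp
  fix x assume "x \<in> Gnm_arcs n m"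
  then obtain k where x: "x = (k div d + 1, n - k mod n)" and "k < m"
    unfolding Gnm_arcs_eq[OF assms] d_def by auto
  have "k div d * d \<le> k" "k < k div d * d + d"
    using \<open>d > 0\<close> dividend_less_div_times[of d k] by simp_all
  moreover have "k div d \<le> \<kappa>" unfolding \<kappa>_def using \<open>k < m\<close> by (simp add: div_le_mono)
  ultimately have "x \<in> (\<Union>j\<in>{1..\<kappa>}. out_block n j d) \<union> out_block n (\<kappa> + 1) (m mod d)"
  proof (cases "k div d = \<kappa>")
    case True
    moreover have "k < \<kappa> * d + m mod d" using \<open>k < m\<close> m by linarith
    ultimately have "x \<in> out_block n (\<kappa> + 1) (m mod d)"
      using \<open>k div d * d \<le> k\<close> unfolding x out_block_def d_def[symmetric] by auto
    then show ?thesis by blast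
  next
    case False
    with \<open>k div d \<le> \<kappa>\<close> have "k div d + 1 \<in> {1..\<kappa>}" by simp
    moreover have "x \<in> out_block n (k div d + 1) d"
      using \<open>k div d * d \<le> k\<close> \<open>k < k div d * d + d\<close> unfolding x out_block_def d_def[symmetric] by auto
    ultimately show ?thesis by blast
  qed
  then show "x \<in> (\<Union>j\<in>{1..m div (n - 1)}. out_block n j (n - 1))
                  \<union> out_block n (m div (n - 1) + 1) (m mod (n - 1))"
    unfolding \<kappa>_def d_def .
qed

lemma out_blocks_subset_Gnm_arcs:
  assumes "n \<ge> 2"
  shows "(\<Union>j\<in>{1..m div (n - 1)}. out_block n j (n - 1))
           \<union> out_block n (m div (n - 1) + 1) (m mod (n - 1)) \<subseteq> Gnm_arcs n m"
proof
  define d where "d = n - 1"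
  define \<kappa> where "\<kappa> = m div d"
  have "d > 0" using assms unfolding d_def by simp
  have m: "m = \<kappa> * d + m mod d" unfolding \<kappa>_def by simp
  fix x assume "x \<in> (\<Union>j\<in>{1..m div (n - 1)}. out_block n j (n - 1))
                    \<union> out_block n (m div (n - 1) + 1) (m mod (n - 1))"
  then have "x \<in> (\<Union>j\<in>{1..\<kappa>}. out_block n j d) \<union> out_block n (\<kappa> + 1) (m mod d)"
    unfolding \<kappa>_def d_def .
  then have "x \<in> {(k div d + 1, n - k mod n) | k. k < m}"
  proof (elim UnE UN_E)
    fix j assume "j \<in> {1..\<kappa>}" and "x \<in> out_block n j d"
    then obtain i k where j: "j = Suc i" and x: "x = (j, n - k mod n)"
      and k: "i * d \<le> k" "k < i * d + d"
      unfolding out_block_def d_def[symmetric] by (cases j) auto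
    have "k div d = i" using k by (intro div_nat_eqI) (simp_all add: mult.commute)
    moreover have "k < m"
    proof -
      have "Suc i * d \<le> \<kappa> * d" using \<open>j \<in> {1..\<kappa>}\<close> unfolding j by (intro mult_le_mono1) simp
      then have "i * d + d \<le> \<kappa> * d" by simp
      then show ?thesis using k(2) m by linarith
    qed
    ultimately show ?thesis unfolding x j by (auto intro!: exI[of _ k])
  next
    assume "x \<in> out_block n (\<kappa> + 1) (m mod d)"
    then obtain k where x: "x = (\<kappa> + 1, n - k mod n)" and k: "\<kappa> * d \<le> k" "k < \<kappa> * d + m mod d"
      unfolding out_block_def d_def[symmetric] by auto
    have "m mod d < d" using \<open>d > 0\<close> by simp
    with k have "k div d = \<kappa>" by (intro div_nat_eqI) (simp_all add: mult.commute)
    moreover have "k < m" using k(2) m by linarith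
    ultimately show ?thesis unfolding x by (auto intro!: exI[of _ k])
  qed
  then show "x \<in> Gnm_arcs n m"
    unfolding Gnm_arcs_eq[OF assms] d_def .
qed

theorem proposition1:
  fixes n m :: nat
  assumes "n \<ge> 2" and "m \<le> n * (n - 1)"
  defines "\<kappa> \<equiv> nat \<lfloor>real m / real (n - 1)\<rfloor>"
  shows "\<exists>S F. (\<forall>r\<in>{1..\<kappa>}. is_dir_star n n r (S r))
             \<and> is_dir_star n (m - \<kappa> * (n - 1) + 1) (\<kappa> + 1) F
             \<and> Gnm_arcs n m = (\<Union>r\<in>{1..\<kappa>}. S r) \<union> F"
proof -
  have \<kappa>: "\<kappa> = m div (n - 1)"
    unfolding \<kappa>_def by (simp add: floor_divide_of_nat_eq)
  then have rest: "m - \<kappa> * (n - 1) = m mod (n - 1)"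
    by (simp add: minus_div_mult_eq_mod)
  have "\<forall>r\<in>{1..\<kappa>}. is_dir_star n n r (out_block n r (n - 1))"
    using is_dir_star_out_block[of "n - 1" n] assms(1) by simp
  moreover have "is_dir_star n (m - \<kappa> * (n - 1) + 1) (\<kappa> + 1) (out_block n (\<kappa> + 1) (m mod (n - 1)))"
  proof -
    have "m mod (n - 1) < n - 1" using assms(1) by simp
    then show ?thesis unfolding rest by (intro is_dir_star_out_block) linarith
  qed
  moreover have "Gnm_arcs n m = (\<Union>r\<in>{1..\<kappa>}. out_block n r (n - 1)) \<union> out_block n (\<kappa> + 1) (m mod (n - 1))"
    unfolding \<kappa> using Gnm_arcs_subset_out_blocks[OF assms(1)] out_blocks_subset_Gnm_arcs[OF assms(1)]
    by (rule subset_antisym)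
  ultimately show ?thesis
    by (intro exI[of _ "\<lambda>r. out_block n r (n - 1)"] exI[of _ "out_block n (\<kappa> + 1) (m mod (n - 1))"]) blast
qed

end
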